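(* Let $G$ be a finite simple graph. Then $G$ has no edges if and only if its chromatic symmetric function $X_G$ belongs to $\Gamma$.
   Context: For a finite simple graph $G=(V,E)$ with $V=\{v_1,\dots,v_n\}$, a proper coloring is a map $\kappa:V\to\{1,2,\dots\}$ with $\kappa(v_i)\neq\kappa(v_j)$ whenever $\{v_i,v_j\}\in E$. The chromatic symmetric function is $X_G=\sum_\kappa x_{\kappa(v_1)}\cdots x_{\kappa(v_n)}$, summed over all proper colorings. Let $p_r=\sum_i x_i^r$ be the power sum symmetric functions and $\Gamma=\mathbb{Q}[p_1,p_3,p_5,\dots]$ the subalgebra of the algebra $\Lambda$ of symmetric functions generated by the odd power sums. *)

theory Defs
  imports Complex_Main "HOL-Library.Multiset" "HOL-Library.FuncSet"
begin

text \<open>Formal power series over the rationals in countably many commuting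
variables x_0, x_1, ...  A monomial is represented by the multiset of the
indices of its variables (with multiplicity); a series is its coefficient
function.\<close>

type_synonym fps_inf = "nat multiset \<Rightarrow> rat"

definition fps_const :: "rat \<Rightarrow> fps_inf" where
  "fps_const c = (\<lambda>m. if m = {#} then c else 0)"

definition fps_add :: "fps_inf \<Rightarrow> fps_inf \<Rightarrow> fps_inf" where
  "fps_add f g = (\<lambda>m. f m + g m)"

definition fps_smult :: "rat \<Rightarrow> fps_inf \<Rightarrow> fps_inf" where
  "fps_smult c f = (\<lambda>m. c * f m)"

definition fps_mult :: "fps_inf \<Rightarrow> fps_inf \<Rightarrow> fps_inf" where
  "fps_mult f g = (\<lambda>m. \<Sum>a\<in>{a. a \<subseteq># m}. f a * g (m - a))"

definition power_sum :: "nat \<Rightarrow> fps_inf" where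
  "power_sum r = (\<lambda>m. if \<exists>i. m = replicate_mset r i then 1 else 0)"

inductive_set Gamma :: "fps_inf set" where
  const: "fps_const c \<in> Gamma"
| gen: "odd r \<Longrightarrow> power_sum r \<in> Gamma"
| add: "f \<in> Gamma \<Longrightarrow> g \<in> Gamma \<Longrightarrow> fps_add f g \<in> Gamma"
| smult: "f \<in> Gamma \<Longrightarrow> fps_smult c f \<in> Gamma"
| mult: "f \<in> Gamma \<Longrightarrow> g \<in> Gamma \<Longrightarrow> fps_mult f g \<in> Gamma"

definition simple_graph :: "'a set \<Rightarrow> 'a set set \<Rightarrow> bool" where
  "simple_graph V E \<longleftrightarrow> finite V \<and>
     (\<forall>e\<in>E. \<exists>u v. e = {u, v} \<and> u \<noteq> v \<and> u \<in> V \<and> v \<in> V)"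

definition proper_coloring :: "'a set \<Rightarrow> 'a set set \<Rightarrow> ('a \<Rightarrow> nat) \<Rightarrow> bool" where
  "proper_coloring V E \<kappa> \<longleftrightarrow> \<kappa> \<in> V \<rightarrow>\<^sub>E UNIV \<and>
     (\<forall>u\<in>V. \<forall>v\<in>V. {u, v} \<in> E \<longrightarrow> \<kappa> u \<noteq> \<kappa> v)"

definition chromatic_sym :: "'a set \<Rightarrow> 'a set set \<Rightarrow> fps_inf" where
  "chromatic_sym V E = (\<lambda>m. of_nat (card
     {\<kappa>. proper_coloring V E \<kappa> \<and> image_mset \<kappa> (mset_set V) = m}))"

end

theory Submission
  imports Defs
begin

text \<open>If \<open>G\<close> has no edges then \<open>X_G = p_1^n\<close>. Conversely, the substitution \<open>x_0 = t\<close>,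
  \<open>x_1 = -t\<close> is a ring homomorphism which removes the \<open>t\<close>-dependence of every odd power sum,
  so no element of \<open>\<Gamma>\<close> depends on \<open>t\<close> after it. If \<open>G\<close> has an edge, put
  \<open>N = x_2 \<cdots> x_{n-1}\<close>; the coefficient of \<open>t^2 N\<close> in \<open>X_G(t, -t, x_2, \<dots>)\<close> is
  \<open>[x_0^2 N] - [x_0 x_1 N] + [x_1^2 N]\<close>. Fix an order of the vertices: recolouring the later of
  the two vertices sharing colour \<open>c \<in> {0, 1}\<close> with \<open>1 - c\<close> injects the colourings counted
  by \<open>[x_0^2 N]\<close> and \<open>[x_1^2 N]\<close> into those counted by \<open>[x_0 x_1 N]\<close>, and misses a
  colouring giving the ends of the edge the colours 0 and 1. So that coefficient is negative.\<close>

section \<open>Splitting off the variables \<open>x_0\<close> and \<open>x_1\<close>\<close>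

lemma finite_submultisets: "finite {a. a \<subseteq># m}"
proof (rule finite_subset)
  show "{a. a \<subseteq># m} \<subseteq> mset ` {xs. set xs \<subseteq> set_mset m \<and> length xs \<le> size m}"
  proof
    fix a assume "a \<in> {a. a \<subseteq># m}"
    moreover obtain xs where "mset xs = a" using ex_mset by blast
    ultimately have "set xs \<subseteq> set_mset m" "length xs \<le> size m"
      using set_mset_mono size_mset_mono by fastforce+
    then show "a \<in> mset ` {xs. set xs \<subseteq> set_mset m \<and> length xs \<le> size m}"
      using \<open>mset xs = a\<close> by blast
  qed
qed (simp add: finite_lists_length_le)

definition adjoin01 :: "nat multiset \<Rightarrow> nat \<Rightarrow> nat \<Rightarrow> nat multiset" where
  "adjoin01 N i j = N + replicate_mset i 0 + replicate_mset j 1"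

definition avoids01 :: "nat multiset \<Rightarrow> bool" where
  "avoids01 N \<longleftrightarrow> (\<forall>x\<in>#N. 1 < x)"

lemma count_adjoin01:
  "count (adjoin01 N i j) x = count N x + (if x = 0 then i else 0) + (if x = 1 then j else 0)"
  by (simp add: adjoin01_def)

lemma avoids01_count: "avoids01 N \<Longrightarrow> x \<le> 1 \<Longrightarrow> count N x = 0"
  by (auto simp: avoids01_def not_in_iff[symmetric])

lemma adjoin01_filter_count: "adjoin01 {#x \<in># a. 1 < x#} (count a 0) (count a 1) = a"
  by (auto simp: multiset_eq_iff count_adjoin01)

lemma
  assumes "avoids01 N"
  shows filter_adjoin01: "{#x \<in># adjoin01 N i j. 1 < x#} = N"
    and count_adjoin01_0: "count (adjoin01 N i j) 0 = i"
    and count_adjoin01_1: "count (adjoin01 N i j) 1 = j"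
  using assms avoids01_count[OF assms]
  by (auto simp: multiset_eq_iff count_adjoin01 avoids01_def not_in_iff[symmetric]
      intro: Nat.gr0I)

lemma avoids01_submultiset: "avoids01 N \<Longrightarrow> A \<subseteq># N \<Longrightarrow> avoids01 A"
  by (auto simp: avoids01_def dest: mset_subset_eqD)

lemma avoids01_diff: "avoids01 N \<Longrightarrow> avoids01 (N - A)"
  by (auto simp: avoids01_def dest: in_diffD)

lemma bij_betw_adjoin01_submultisets:
  assumes N: "avoids01 N"
  shows "bij_betw (\<lambda>(A, i', j'). adjoin01 A i' j')
    ({A. A \<subseteq># N} \<times> {..i} \<times> {..j}) {a. a \<subseteq># adjoin01 N i j}"
proof (rule bij_betw_byWitness[where f' = "\<lambda>a. ({#x \<in># a. 1 < x#}, count a 0, count a 1)"])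
  show "\<forall>b\<in>{A. A \<subseteq># N} \<times> {..i} \<times> {..j}.
      (\<lambda>a. ({#x \<in># a. 1 < x#}, count a 0, count a 1)) ((\<lambda>(A, i', j'). adjoin01 A i' j') b) = b"
    using avoids01_submultiset[OF N]
    by (auto simp del: One_nat_def simp: filter_adjoin01 count_adjoin01_0 count_adjoin01_1)
  show "(\<lambda>(A, i', j'). adjoin01 A i' j') ` ({A. A \<subseteq># N} \<times> {..i} \<times> {..j})
      \<subseteq> {a. a \<subseteq># adjoin01 N i j}"
    by (auto simp: subseteq_mset_def count_adjoin01 add_mono)
  show "(\<lambda>a. ({#x \<in># a. 1 < x#}, count a 0, count a 1)) ` {a. a \<subseteq># adjoin01 N i j}
      \<subseteq> {A. A \<subseteq># N} \<times> {..i} \<times> {..j}"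
  proof (rule image_subsetI)
    fix a assume "a \<in> {a. a \<subseteq># adjoin01 N i j}"
    then have a: "count a x \<le> count (adjoin01 N i j) x" for x
      by (simp add: subseteq_mset_def)
    have "{#x \<in># a. 1 < x#} \<subseteq># N"
    proof (rule mset_subset_eqI)
      show "count {#x \<in># a. 1 < x#} x \<le> count N x" for x
        using a[of x] by (auto simp: count_adjoin01)
    qed
    moreover have "count a 0 \<le> i" "count a 1 \<le> j"
      using a[of 0] a[of 1] avoids01_count[OF N, of 0] avoids01_count[OF N, of 1]
      by (simp_all add: count_adjoin01)
    ultimately show "({#x \<in># a. 1 < x#}, count a 0, count a 1) \<in> {A. A \<subseteq># N} \<times> {..i} \<times> {..j}"
      by simp
  qed
qed (simp del: One_nat_def add: adjoin01_filter_count)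

lemma diff_adjoin01:
  "A \<subseteq># N \<Longrightarrow> i' \<le> i \<Longrightarrow> j' \<le> j \<Longrightarrow>
    adjoin01 N i j - adjoin01 A i' j' = adjoin01 (N - A) (i - i') (j - j')"
  by (auto simp: multiset_eq_iff count_adjoin01 subseteq_mset_def)

lemma fps_mult_adjoin01:
  assumes N: "avoids01 N"
  shows "fps_mult f g (adjoin01 N i j) =
    (\<Sum>A\<in>{A. A \<subseteq># N}. \<Sum>i'\<le>i. \<Sum>j'\<le>j.
       f (adjoin01 A i' j') * g (adjoin01 (N - A) (i - i') (j - j')))"
proof -
  have "fps_mult f g (adjoin01 N i j) = (\<Sum>(A, i', j')\<in>{A. A \<subseteq># N} \<times> {..i} \<times> {..j}.
      f (adjoin01 A i' j') * g (adjoin01 N i j - adjoin01 A i' j'))"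
    unfolding fps_mult_def sum.reindex_bij_betw[OF bij_betw_adjoin01_submultisets[OF N], symmetric]
    by (simp add: case_prod_unfold)
  also have "\<dots> = (\<Sum>(A, i', j')\<in>{A. A \<subseteq># N} \<times> {..i} \<times> {..j}.
      f (adjoin01 A i' j') * g (adjoin01 (N - A) (i - i') (j - j')))"
    by (rule sum.cong) (auto simp: diff_adjoin01)
  finally show ?thesis
    by (simp add: sum.cartesian_product)
qed

section \<open>The substitution \<open>x_0 = t\<close>, \<open>x_1 = -t\<close>\<close>

lemma alternating_convolution:
  fixes F G :: "nat \<Rightarrow> nat \<Rightarrow> 'r::comm_ring_1"
  shows "(\<Sum>j\<le>d. (-1)^j * (\<Sum>i'\<le>d - j. \<Sum>j'\<le>j. F i' j' * G (d - j - i') (j - j')))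
       = (\<Sum>k\<le>d. (\<Sum>j\<le>k. (-1)^j * F (k - j) j) * (\<Sum>j\<le>d - k. (-1)^j * G (d - k - j) j))"
proof -
  have "(\<Sum>j\<le>d. (-1)^j * (\<Sum>i'\<le>d - j. \<Sum>j'\<le>j. F i' j' * G (d - j - i') (j - j')))
      = (\<Sum>(j, i', j')\<in>Sigma {..d} (\<lambda>j. {..d - j} \<times> {..j}).
           (-1)^j * (F i' j' * G (d - j - i') (j - j')))"
    by (simp add: sum.Sigma sum_distrib_left split_def)
  also have "\<dots> = (\<Sum>(k, j1, j2)\<in>Sigma {..d} (\<lambda>k. {..k} \<times> {..d - k}).
      ((-1)^j1 * F (k - j1) j1) * ((-1)^j2 * G (d - k - j2) j2))"
  proof (rule sum.reindex_bij_witness[where i = "\<lambda>(k, j1, j2). (j1 + j2, k - j1, j1)"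
        and j = "\<lambda>(j, i', j'). (i' + j', j', j - j')"])
    fix a assume "a \<in> Sigma {..d} (\<lambda>j. {..d - j} \<times> {..j})"
    then obtain j i' j' where a: "a = (j, i', j')" "j \<le> d" "i' \<le> d - j" "j' \<le> j" by auto
    have "(-1::'r)^j = (-1)^j' * (-1)^(j - j')" using a by (simp flip: power_add)
    moreover have "d - (i' + j') - (j - j') = d - j - i'" using a by simp
    ultimately show "(case case a of (j, i', j') \<Rightarrow> (i' + j', j', j - j') of
        (k, j1, j2) \<Rightarrow> (-1)^j1 * F (k - j1) j1 * ((-1)^j2 * G (d - k - j2) j2)) =
       (case a of (j, i', j') \<Rightarrow> (-1)^j * (F i' j' * G (d - j - i') (j - j')))"
      using a by (simp add: mult_ac)
  qed auto
  also have "\<dots> = (\<Sum>k\<le>d. (\<Sum>j\<le>k. (-1)^j * F (k - j) j) * (\<Sum>j\<le>d - k. (-1)^j * G (d - k - j) j))"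
    by (simp add: sum.Sigma sum_product)
  finally show ?thesis .
qed

text \<open>The coefficient of \<open>t^d x^N\<close> in \<open>f(t, -t, x_2, x_3, \<dots>)\<close>.\<close>
definition antipodal_coeff :: "fps_inf \<Rightarrow> nat multiset \<Rightarrow> nat \<Rightarrow> rat" where
  "antipodal_coeff f N d = (\<Sum>j\<le>d. (-1)^j * f (adjoin01 N (d - j) j))"

definition antipodal_invariant :: "fps_inf \<Rightarrow> bool" where
  "antipodal_invariant f \<longleftrightarrow> (\<forall>N d. avoids01 N \<longrightarrow> 0 < d \<longrightarrow> antipodal_coeff f N d = 0)"

lemma antipodal_coeff_fps_mult:
  assumes N: "avoids01 N"
  shows "antipodal_coeff (fps_mult f g) N d =
    (\<Sum>A\<in>{A. A \<subseteq># N}. \<Sum>k\<le>d. antipodal_coeff f A k * antipodal_coeff g (N - A) (d - k))"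
proof -
  have "antipodal_coeff (fps_mult f g) N d =
      (\<Sum>A\<in>{A. A \<subseteq># N}. \<Sum>j\<le>d. (-1)^j * (\<Sum>i'\<le>d - j. \<Sum>j'\<le>j.
        f (adjoin01 A i' j') * g (adjoin01 (N - A) (d - j - i') (j - j'))))"
    by (simp add: antipodal_coeff_def fps_mult_adjoin01[OF N] sum_distrib_left
        sum.swap[of _ "{A. A \<subseteq># N}"])
  also have "\<dots> =
      (\<Sum>A\<in>{A. A \<subseteq># N}. \<Sum>k\<le>d. antipodal_coeff f A k * antipodal_coeff g (N - A) (d - k))"
    unfolding antipodal_coeff_def
    by (rule sum.cong[OF refl], rule alternating_convolution)
  finally show ?thesis .
qed

lemma antipodal_invariant_fps_const: "antipodal_invariant (fps_const c)"
  by (auto simp: antipodal_invariant_def antipodal_coeff_def fps_const_def adjoin01_def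
      intro!: sum.neutral)

lemma adjoin01_eq_replicate_mset:
  assumes N: "avoids01 N" and "0 < d" "j \<le> d"
  shows "adjoin01 N (d - j) j = replicate_mset r x \<longleftrightarrow>
    N = {#} \<and> r = d \<and> (x = 0 \<and> j = 0 \<or> x = 1 \<and> j = d)"
proof
  assume "adjoin01 N (d - j) j = replicate_mset r x"
  then have c: "count N y + (if y = 0 then d - j else 0) + (if y = 1 then j else 0) =
      (if y = x then r else 0)" for y
    by (metis count_adjoin01 count_replicate_mset)
  have "x \<le> 1"
    using c[of 0] c[of 1] assms(2) by (auto split: if_splits)
  have "N = {#}"
  proof (rule multiset_eqI)
    show "count N y = count {#} y" for y
      using c[of y] \<open>x \<le> 1\<close> avoids01_count[OF N, of y] by (cases "y \<le> 1") auto
  qed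
  then show "N = {#} \<and> r = d \<and> (x = 0 \<and> j = 0 \<or> x = 1 \<and> j = d)"
    using c[of 0] c[of 1] assms(2,3) by (auto split: if_splits)
qed (auto simp: adjoin01_def)

lemma antipodal_invariant_power_sum:
  assumes "odd r"
  shows "antipodal_invariant (power_sum r)"
  unfolding antipodal_invariant_def
proof (intro allI impI)
  fix N d assume N: "avoids01 N" and d: "0 < (d::nat)"
  have "power_sum r (adjoin01 N (d - j) j) =
      (if N = {#} \<and> r = d \<and> (j = 0 \<or> j = d) then 1 else 0)" if "j \<le> d" for j
    using adjoin01_eq_replicate_mset[OF N d that] by (auto simp: power_sum_def)
  then have "antipodal_coeff (power_sum r) N d =
      (\<Sum>j\<le>d. (-1)^j * (if N = {#} \<and> r = d \<and> (j = 0 \<or> j = d) then 1 else 0))"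
    by (simp add: antipodal_coeff_def)
  also have "\<dots> = (if N = {#} \<and> r = d then
      \<Sum>j\<le>d. (if j = 0 then (-1)^j else 0) + (if j = d then (-1)^j else 0) else 0)"
    using d by (auto intro!: sum.cong)
  also have "\<dots> = (if N = {#} \<and> r = d then 1 + (-1)^d else 0)"
    by (simp add: sum.distrib)
  also have "\<dots> = 0"
    using assms by auto
  finally show "antipodal_coeff (power_sum r) N d = 0" .
qed

lemma antipodal_invariant_fps_add:
  "antipodal_invariant f \<Longrightarrow> antipodal_invariant g \<Longrightarrow> antipodal_invariant (fps_add f g)"
  by (simp add: antipodal_invariant_def antipodal_coeff_def fps_add_def distrib_left sum.distrib)

lemma antipodal_invariant_fps_smult:
  "antipodal_invariant f \<Longrightarrow> antipodal_invariant (fps_smult c f)"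
  by (simp add: antipodal_invariant_def antipodal_coeff_def fps_smult_def mult.left_commute
      flip: sum_distrib_left)

lemma antipodal_invariant_fps_mult:
  assumes f: "antipodal_invariant f" and g: "antipodal_invariant g"
  shows "antipodal_invariant (fps_mult f g)"
  unfolding antipodal_invariant_def
proof (intro allI impI)
  fix N d assume N: "avoids01 N" and d: "0 < (d::nat)"
  have "antipodal_coeff f A k * antipodal_coeff g (N - A) (d - k) = 0"
    if "A \<subseteq># N" for A k
    using f g avoids01_submultiset[OF N that] avoids01_diff[OF N] d
    by (cases "k = 0") (auto simp: antipodal_invariant_def)
  then show "antipodal_coeff (fps_mult f g) N d = 0"
    by (simp add: antipodal_coeff_fps_mult[OF N] del: mult_eq_0_iff)
qed

lemma Gamma_antipodal_invariant: "f \<in> Gamma \<Longrightarrow> antipodal_invariant f"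
  by (induction rule: Gamma.induct)
    (auto intro: antipodal_invariant_fps_const antipodal_invariant_power_sum
      antipodal_invariant_fps_add antipodal_invariant_fps_smult antipodal_invariant_fps_mult)

section \<open>Edgeless graphs\<close>

fun fps_pow :: "fps_inf \<Rightarrow> nat \<Rightarrow> fps_inf" where
  "fps_pow f 0 = fps_const 1"
| "fps_pow f (Suc k) = fps_mult f (fps_pow f k)"

lemma fps_pow_in_Gamma: "f \<in> Gamma \<Longrightarrow> fps_pow f k \<in> Gamma"
  by (induction k) (auto intro: Gamma.intros)

lemma fps_mult_power_sum_1: "fps_mult (power_sum 1) f m = (\<Sum>i\<in>set_mset m. f (m - {#i#}))"
proof -
  have "fps_mult (power_sum 1) f m =
      (\<Sum>a\<in>{a. a \<subseteq># m}. if a \<in> (\<lambda>i. {#i#}) ` set_mset m then f (m - a) else 0)"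
    unfolding fps_mult_def power_sum_def by (rule sum.cong) (auto simp: image_iff)
  also have "\<dots> = (\<Sum>a\<in>(\<lambda>i. {#i#}) ` set_mset m. f (m - a))"
    by (simp add: sum.inter_restrict[OF finite_submultisets, symmetric] Int_absorb1 image_subset_iff)
  also have "\<dots> = (\<Sum>i\<in>set_mset m. f (m - {#i#}))"
    by (simp add: sum.reindex inj_on_def)
  finally show ?thesis .
qed

definition colorings :: "'a set \<Rightarrow> 'a set set \<Rightarrow> nat multiset \<Rightarrow> ('a \<Rightarrow> nat) set" where
  "colorings V E M = {\<kappa>. proper_coloring V E \<kappa> \<and> image_mset \<kappa> (mset_set V) = M}"

lemma chromatic_sym_eq_card_colorings: "chromatic_sym V E M = of_nat (card (colorings V E M))"
  by (simp add: chromatic_sym_def colorings_def)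

lemma finite_colorings:
  assumes "finite V"
  shows "finite (colorings V E M)"
proof (rule finite_subset)
  show "colorings V E M \<subseteq> V \<rightarrow>\<^sub>E set_mset M"
    using assms by (auto simp: colorings_def proper_coloring_def PiE_def)
qed (simp add: assms finite_PiE)

lemma colorings_edgeless_insert:
  assumes V: "finite V" and v: "v \<notin> V"
  shows "colorings (insert v V) {} m =
    (\<Union>i\<in>set_mset m. (\<lambda>\<kappa>. \<kappa>(v := i)) ` colorings V {} (m - {#i#}))"
proof (intro equalityI subsetI)
  fix \<kappa> assume "\<kappa> \<in> colorings (insert v V) {} m"
  then have \<kappa>: "\<kappa> \<in> insert v V \<rightarrow>\<^sub>E UNIV" and m: "add_mset (\<kappa> v) (image_mset \<kappa> (mset_set V)) = m"
    using V v by (auto simp: colorings_def proper_coloring_def)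
  let ?\<kappa>' = "\<kappa>(v := undefined)"
  have "image_mset ?\<kappa>' (mset_set V) = image_mset \<kappa> (mset_set V)"
    using V v by (intro image_mset_cong) auto
  then have "?\<kappa>' \<in> colorings V {} (m - {#\<kappa> v#})"
    using \<kappa> m v by (auto simp: colorings_def proper_coloring_def PiE_def extensional_def)
  moreover have "\<kappa> v \<in># m" using m by auto
  ultimately show "\<kappa> \<in> (\<Union>i\<in>set_mset m. (\<lambda>\<kappa>. \<kappa>(v := i)) ` colorings V {} (m - {#i#}))"
    by (auto intro!: bexI[of _ "\<kappa> v"] image_eqI[of _ _ ?\<kappa>'])
next
  fix \<kappa> assume "\<kappa> \<in> (\<Union>i\<in>set_mset m. (\<lambda>\<kappa>. \<kappa>(v := i)) ` colorings V {} (m - {#i#}))"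
  then obtain i \<kappa>' where i: "i \<in># m" and \<kappa>': "\<kappa>' \<in> V \<rightarrow>\<^sub>E UNIV"
    and m: "image_mset \<kappa>' (mset_set V) = m - {#i#}" and \<kappa>: "\<kappa> = \<kappa>'(v := i)"
    by (auto simp: colorings_def proper_coloring_def)
  have "image_mset \<kappa> (mset_set V) = image_mset \<kappa>' (mset_set V)"
    using V v \<kappa> by (intro image_mset_cong) auto
  then show "\<kappa> \<in> colorings (insert v V) {} m"
    using V v i m \<kappa> \<kappa>' by (auto simp: colorings_def proper_coloring_def PiE_def extensional_def)
qed

lemma card_colorings_edgeless_insert:
  assumes V: "finite V" and v: "v \<notin> V"
  shows "card (colorings (insert v V) {} m) = (\<Sum>i\<in>set_mset m. card (colorings V {} (m - {#i#})))"
proof -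
  have ext: "\<kappa> v = undefined" if "\<kappa> \<in> colorings V {} M" for \<kappa> M
    using that v by (auto simp: colorings_def proper_coloring_def PiE_def extensional_def)
  have "inj_on (\<lambda>\<kappa>. \<kappa>(v := i)) (colorings V {} M)" for i M
  proof (rule inj_onI)
    fix \<kappa>1 \<kappa>2 assume "\<kappa>1 \<in> colorings V {} M" "\<kappa>2 \<in> colorings V {} M" "\<kappa>1(v := i) = \<kappa>2(v := i)"
    then show "\<kappa>1 = \<kappa>2" using ext by (metis fun_upd_idem fun_upd_upd)
  qed
  then show ?thesis
    unfolding colorings_edgeless_insert[OF assms]
    by (subst card_UN_disjoint) (auto simp: finite_colorings[OF V] card_image fun_eq_iff,
        metis fun_upd_same)
qed

lemma chromatic_sym_edgeless:
  "finite V \<Longrightarrow> chromatic_sym V {} = fps_pow (power_sum 1) (card V)"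
proof (induction V rule: finite_induct)
  case empty
  have colorings_empty: "colorings {} {} m = (if m = {#} then {\<lambda>_. undefined} else {})" for m
    by (auto simp: colorings_def proper_coloring_def)
  show ?case
    by (simp add: fun_eq_iff chromatic_sym_eq_card_colorings fps_const_def colorings_empty)
next
  case (insert v V)
  then show ?case
    by (auto simp del: One_nat_def simp: fun_eq_iff chromatic_sym_eq_card_colorings
        card_colorings_edgeless_insert fps_mult_power_sum_1)
qed

section \<open>Graphs with an edge\<close>

lemma simple_graph_edge:
  assumes "simple_graph V E" "{a, b} \<in> E"
  shows "a \<in> V" "b \<in> V" "a \<noteq> b"
  using assms by (auto simp: simple_graph_def doubleton_eq_iff)

lemma card_color_class:
  assumes "finite V"
  shows "card {x\<in>V. \<kappa> x = c} = count (image_mset \<kappa> (mset_set V)) c"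
proof -
  have "{x\<in>V. \<kappa> x = c} = \<kappa> -` {c} \<inter> V" by auto
  then show ?thesis
    using assms by (simp add: count_image_mset)
qed

lemma image_mset_fun_upd:
  assumes "finite V" "q \<in> V"
  shows "image_mset (\<kappa>(q := c)) (mset_set V) = add_mset c (image_mset \<kappa> (mset_set V) - {#\<kappa> q#})"
proof -
  have V: "mset_set V = add_mset q (mset_set (V - {q}))"
    using assms by (simp add: mset_set.remove)
  have "image_mset (\<kappa>(q := c)) (mset_set (V - {q})) = image_mset \<kappa> (mset_set (V - {q}))"
    using assms by (intro image_mset_cong) auto
  then show ?thesis unfolding V by simp
qed

lemma proper_coloring_fun_upd:
  assumes G: "simple_graph V E" and \<kappa>: "proper_coloring V E \<kappa>" and "q \<in> V"
    and unused: "\<forall>x\<in>V. \<kappa> x \<noteq> c"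
  shows "proper_coloring V E (\<kappa>(q := c))"
  unfolding proper_coloring_def
proof (intro conjI ballI impI)
  show "\<kappa>(q := c) \<in> V \<rightarrow>\<^sub>E UNIV"
    using \<kappa> \<open>q \<in> V\<close> by (auto simp: proper_coloring_def PiE_def extensional_def)
next
  fix a b assume ab: "a \<in> V" "b \<in> V" "{a, b} \<in> E"
  then have "a \<noteq> b" "\<kappa> a \<noteq> \<kappa> b"
    using simple_graph_edge[OF G] \<kappa> by (auto simp: proper_coloring_def)
  then show "(\<kappa>(q := c)) a \<noteq> (\<kappa>(q := c)) b"
    using unused ab by auto
qed

text \<open>Applied to a colouring that uses a colour \<open>c \<in> {0, 1}\<close> exactly twice and \<open>1 - c\<close> not at
  all, this gives the later (with respect to \<open>idx\<close>) of the two \<open>c\<close>-coloured vertices the colour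
  \<open>1 - c\<close>.\<close>
definition recolour_later :: "('a \<Rightarrow> nat) \<Rightarrow> 'a set \<Rightarrow> ('a \<Rightarrow> nat) \<Rightarrow> 'a \<Rightarrow> nat" where
  "recolour_later idx V \<kappa> = (\<lambda>x.
     if x \<in> V \<and> \<kappa> x \<le> 1 \<and> (\<exists>y\<in>V. \<kappa> y = \<kappa> x \<and> idx y < idx x) then 1 - \<kappa> x else \<kappa> x)"

lemma recolour_later_eq_fun_upd:
  assumes pq: "{x\<in>V. \<kappa> x = c} = {p, q}" "idx p < idx q"
    and c: "c \<le> 1" and unused: "\<forall>x\<in>V. \<kappa> x \<noteq> 1 - c"
  shows "recolour_later idx V \<kappa> = \<kappa>(q := 1 - c)"
proof
  have "p \<in> V" "q \<in> V" "\<kappa> p = c" "\<kappa> q = c"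
    using pq(1) by blast+
  moreover have low: "x = p \<or> x = q" if "x \<in> V" "\<kappa> x \<le> 1" for x
    using that unused pq(1) c by (cases "\<kappa> x = c") auto
  ultimately show "recolour_later idx V \<kappa> x = (\<kappa>(q := 1 - c)) x" for x
    using low[of x] pq(2) c unfolding recolour_later_def by (auto; fastforce)
qed

lemma recolour_later_doubled:
  fixes idx :: "'a \<Rightarrow> nat"
  assumes V: "finite V" and G: "simple_graph V E" and idx: "inj_on idx V" and c: "c \<le> 1"
    and \<kappa>: "\<kappa> \<in> colorings V E M" and twice: "count M c = 2" and unused: "count M (1 - c) = 0"
  obtains p q where "idx p < idx q"
    "{x\<in>V. recolour_later idx V \<kappa> x \<le> 1} = {p, q}"
    "\<kappa> = (recolour_later idx V \<kappa>)(q := recolour_later idx V \<kappa> p)"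
    "recolour_later idx V \<kappa> \<in> colorings V E (add_mset (1 - c) (M - {#c#}))"
proof -
  have proper: "proper_coloring V E \<kappa>" and M: "image_mset \<kappa> (mset_set V) = M"
    using \<kappa> by (auto simp: colorings_def)
  obtain a b where ab: "{x\<in>V. \<kappa> x = c} = {a, b}" "a \<noteq> b"
    using card_color_class[OF V, of \<kappa> c] M twice by (auto simp: card_2_iff)
  then have "idx a \<noteq> idx b"
    using idx by (auto dest: inj_onD)
  then obtain p q where pq: "{x\<in>V. \<kappa> x = c} = {p, q}" "idx p < idx q"
    using ab(1) by (metis insert_commute linorder_neqE_nat)
  then have "q \<in> V" "\<kappa> p = c" "\<kappa> q = c"
    by blast+
  have no_1c: "\<forall>x\<in>V. \<kappa> x \<noteq> 1 - c"
    using card_color_class[OF V, of \<kappa> "1 - c"] M unused V by auto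
  note recolour = recolour_later_eq_fun_upd[OF pq c no_1c]
  have low: "\<kappa> x = c" if "x \<in> V" "\<kappa> x \<le> 1" for x
    using no_1c that c by force
  show ?thesis
  proof
    show "{x\<in>V. recolour_later idx V \<kappa> x \<le> 1} = {p, q}"
      using pq(1) recolour \<open>q \<in> V\<close> \<open>\<kappa> p = c\<close> c low by auto
    show "\<kappa> = (recolour_later idx V \<kappa>)(q := recolour_later idx V \<kappa> p)"
      using recolour pq(2) \<open>\<kappa> p = c\<close> \<open>\<kappa> q = c\<close> by auto
    show "recolour_later idx V \<kappa> \<in> colorings V E (add_mset (1 - c) (M - {#c#}))"
      using proper_coloring_fun_upd[OF G proper \<open>q \<in> V\<close> no_1c]
        image_mset_fun_upd[OF V \<open>q \<in> V\<close>, of \<kappa> "1 - c"] recolour M \<open>\<kappa> q = c\<close>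
      by (simp add: colorings_def)
  qed (fact pq(2))
qed

lemma recolour_later_doubled_adjoin01:
  fixes idx :: "'a \<Rightarrow> nat"
  assumes V: "finite V" and G: "simple_graph V E" and idx: "inj_on idx V" and N: "avoids01 N"
    and \<kappa>: "\<kappa> \<in> colorings V E (adjoin01 N 2 0) \<union> colorings V E (adjoin01 N 0 2)"
  obtains p q where "idx p < idx q"
    "{x\<in>V. recolour_later idx V \<kappa> x \<le> 1} = {p, q}"
    "\<kappa> = (recolour_later idx V \<kappa>)(q := recolour_later idx V \<kappa> p)"
    "recolour_later idx V \<kappa> \<in> colorings V E (adjoin01 N 1 1)"
proof -
  have counts: "count (adjoin01 N 2 0) 0 = 2" "count (adjoin01 N 2 0) (1 - 0) = 0"
    "add_mset (1 - 0) (adjoin01 N 2 0 - {#0#}) = adjoin01 N 1 1"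
    "count (adjoin01 N 0 2) 1 = 2" "count (adjoin01 N 0 2) (1 - 1) = 0"
    "add_mset (1 - 1) (adjoin01 N 0 2 - {#1#}) = adjoin01 N 1 1"
    using avoids01_count[OF N, of 0] avoids01_count[OF N, of 1]
    by (simp_all add: count_adjoin01 multiset_eq_iff)
  show ?thesis
  proof (cases "\<kappa> \<in> colorings V E (adjoin01 N 2 0)")
    case True
    obtain p q where "idx p < idx q" "{x\<in>V. recolour_later idx V \<kappa> x \<le> 1} = {p, q}"
      "\<kappa> = (recolour_later idx V \<kappa>)(q := recolour_later idx V \<kappa> p)"
      "recolour_later idx V \<kappa> \<in> colorings V E (add_mset (1 - 0) (adjoin01 N 2 0 - {#0#}))"
      by (rule recolour_later_doubled[OF V G idx _ True counts(1,2)]) simp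
    then show ?thesis
      unfolding counts(3) by (rule that)
  next
    case False
    with \<kappa> have B: "\<kappa> \<in> colorings V E (adjoin01 N 0 2)"
      by blast
    obtain p q where "idx p < idx q" "{x\<in>V. recolour_later idx V \<kappa> x \<le> 1} = {p, q}"
      "\<kappa> = (recolour_later idx V \<kappa>)(q := recolour_later idx V \<kappa> p)"
      "recolour_later idx V \<kappa> \<in> colorings V E (add_mset (1 - 1) (adjoin01 N 0 2 - {#1#}))"
      by (rule recolour_later_doubled[OF V G idx _ B counts(4,5)]) simp
    then show ?thesis
      unfolding counts(6) by (rule that)
  qed
qed

lemma inj_on_recolour_later:
  fixes idx :: "'a \<Rightarrow> nat"
  assumes V: "finite V" and G: "simple_graph V E" and idx: "inj_on idx V" and N: "avoids01 N"
  shows "inj_on (recolour_later idx V) (colorings V E (adjoin01 N 2 0) \<union> colorings V E (adjoin01 N 0 2))"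
proof (rule inj_onI)
  let ?r = "recolour_later idx V"
  fix \<kappa>1 \<kappa>2
  assume \<kappa>12: "\<kappa>1 \<in> colorings V E (adjoin01 N 2 0) \<union> colorings V E (adjoin01 N 0 2)"
    "\<kappa>2 \<in> colorings V E (adjoin01 N 2 0) \<union> colorings V E (adjoin01 N 0 2)"
    and eq: "?r \<kappa>1 = ?r \<kappa>2"
  obtain p1 q1 where 1: "idx p1 < idx q1" "{x\<in>V. ?r \<kappa>1 x \<le> 1} = {p1, q1}"
    "\<kappa>1 = (?r \<kappa>1)(q1 := ?r \<kappa>1 p1)"
    using recolour_later_doubled_adjoin01[OF V G idx N \<kappa>12(1)] by blast
  obtain p2 q2 where 2: "idx p2 < idx q2" "{x\<in>V. ?r \<kappa>2 x \<le> 1} = {p2, q2}"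
    "\<kappa>2 = (?r \<kappa>2)(q2 := ?r \<kappa>2 p2)"
    using recolour_later_doubled_adjoin01[OF V G idx N \<kappa>12(2)] by blast
  have "{p1, q1} = {p2, q2}"
    using 1(2) 2(2) eq by simp
  then have "p1 = p2" "q1 = q2"
    using 1(1) 2(1) by (auto simp: doubleton_eq_iff)
  then show "\<kappa>1 = \<kappa>2"
    using 1(3) 2(3) eq by simp
qed

lemma card_colorings_doubled_less:
  assumes V: "finite V" and G: "simple_graph V E" and uv: "{u, v} \<in> E" and N: "avoids01 N"
    and \<kappa>0: "\<kappa>0 \<in> colorings V E (adjoin01 N 1 1)" "\<kappa>0 u = 0" "\<kappa>0 v = 1"
  shows "card (colorings V E (adjoin01 N 2 0)) + card (colorings V E (adjoin01 N 0 2))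
    < card (colorings V E (adjoin01 N 1 1))"
proof -
  obtain idx :: "'a \<Rightarrow> nat" where idx: "inj_on idx V"
    using finite_imp_inj_to_nat_seg[OF V] by blast
  let ?r = "recolour_later idx V"
  let ?A = "colorings V E (adjoin01 N 2 0)" and ?B = "colorings V E (adjoin01 N 0 2)"
  let ?C = "colorings V E (adjoin01 N 1 1)"
  have image: "?r ` (?A \<union> ?B) \<subseteq> ?C - {\<kappa>0}"
  proof
    fix \<mu> assume "\<mu> \<in> ?r ` (?A \<union> ?B)"
    then obtain \<kappa> where \<kappa>: "\<kappa> \<in> ?A \<union> ?B" and \<mu>: "\<mu> = ?r \<kappa>"
      by blast
    obtain p q where pq: "idx p < idx q" "{x\<in>V. ?r \<kappa> x \<le> 1} = {p, q}"
      "\<kappa> = (?r \<kappa>)(q := ?r \<kappa> p)" "?r \<kappa> \<in> ?C"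
      using recolour_later_doubled_adjoin01[OF V G idx N \<kappa>] by blast
    have "?r \<kappa> \<noteq> \<kappa>0"
    proof
      assume r: "?r \<kappa> = \<kappa>0"
      have "u \<in> {x\<in>V. \<kappa>0 x \<le> 1}" "v \<in> {x\<in>V. \<kappa>0 x \<le> 1}"
        using \<kappa>0(2,3) simple_graph_edge[OF G uv] by simp_all
      then have "u \<in> {p, q}" "v \<in> {p, q}"
        using pq(2) unfolding r by blast+
      moreover have "\<kappa> p = \<kappa> q"
        using pq(1,3) by (metis fun_upd_other fun_upd_same less_irrefl)
      ultimately have "\<kappa> u = \<kappa> v"
        by auto
      moreover have "proper_coloring V E \<kappa>"
        using \<kappa> by (auto simp: colorings_def)
      ultimately show False
        using uv simple_graph_edge[OF G uv] by (auto simp: proper_coloring_def)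
    qed
    then show "\<mu> \<in> ?C - {\<kappa>0}"
      using pq(4) \<mu> by simp
  qed
  have "adjoin01 N 2 0 \<noteq> adjoin01 N 0 2"
  proof
    assume "adjoin01 N 2 0 = adjoin01 N 0 2"
    then have "count (adjoin01 N 2 0) 0 = count (adjoin01 N 0 2) 0"
      by simp
    then show False
      by (simp add: count_adjoin01)
  qed
  then have "?A \<inter> ?B = {}"
    by (auto simp: colorings_def)
  then have "card ?A + card ?B = card (?A \<union> ?B)"
    using finite_colorings[OF V] by (simp add: card_Un_disjoint)
  also have "\<dots> = card (?r ` (?A \<union> ?B))"
    using inj_on_recolour_later[OF V G idx N] by (simp add: card_image)
  also have "\<dots> \<le> card (?C - {\<kappa>0})"
    using image finite_colorings[OF V] by (simp add: card_mono)
  also have "\<dots> < card ?C"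
    using finite_colorings[OF V] \<kappa>0(1) by (rule card_Diff1_less)
  finally show ?thesis .
qed

lemma bij_betw_nat_segment_fixing_two:
  assumes V: "finite V" and uv: "u \<in> V" "v \<in> V" "u \<noteq> v"
  obtains \<kappa> :: "'a \<Rightarrow> nat"
  where "\<kappa> \<in> V \<rightarrow>\<^sub>E UNIV" "bij_betw \<kappa> V {0..<card V}" "\<kappa> u = 0" "\<kappa> v = 1"
proof -
  let ?n = "card V"
  have "card {u, v} = 2" "{u, v} \<subseteq> V"
    using uv by auto
  then have n: "2 \<le> ?n" "card (V - {u, v}) = card {2..<?n}"
    using V card_mono[OF V \<open>{u, v} \<subseteq> V\<close>] by (auto simp: card_Diff_subset)
  then obtain h where h: "bij_betw h (V - {u, v}) {2..<?n}"
    using V finite_same_card_bij by blast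
  have "bij_betw (\<lambda>x. if x = u then 0 else 1) {u, v} {0, 1::nat}"
    using uv by (auto simp: bij_betw_def)
  from bij_betw_disjoint_Un[OF this h]
  have "bij_betw (\<lambda>x. if x \<in> {u, v} then if x = u then 0 else 1 else h x)
      ({u, v} \<union> (V - {u, v})) ({0, 1} \<union> {2..<?n})"
    by auto
  moreover have "{u, v} \<union> (V - {u, v}) = V" "{0, 1} \<union> {2..<?n} = {0..<?n}"
    using uv n(1) by auto
  ultimately show ?thesis
    using uv
    by (intro that[of "restrict (\<lambda>x. if x \<in> {u, v} then if x = u then 0 else 1 else h x) V"])
      auto
qed

lemma chromatic_sym_not_antipodal_invariant:
  assumes G: "simple_graph V E" and uv: "{u, v} \<in> E"
  shows "\<not> antipodal_invariant (chromatic_sym V E)"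
proof
  assume invariant: "antipodal_invariant (chromatic_sym V E)"
  have V: "finite V" using G by (simp add: simple_graph_def)
  note uv' = simple_graph_edge[OF G uv]
  define N where "N = mset_set {2..<card V}"
  have N: "avoids01 N"
    by (simp add: N_def avoids01_def)
  obtain \<kappa>0 where \<kappa>0: "\<kappa>0 \<in> V \<rightarrow>\<^sub>E UNIV" "bij_betw \<kappa>0 V {0..<card V}" "\<kappa>0 u = 0" "\<kappa>0 v = 1"
    using bij_betw_nat_segment_fixing_two[OF V uv'] by blast
  have "image_mset \<kappa>0 (mset_set V) = mset_set {0..<card V}"
    using \<kappa>0(2) by (simp add: bij_betw_def image_mset_mset_set)
  also have "\<dots> = adjoin01 N 1 1"
    using card_mono[OF V, of "{u, v}"] uv'
    by (auto simp: N_def adjoin01_def multiset_eq_iff count_mset_set')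
  moreover have "proper_coloring V E \<kappa>0"
    unfolding proper_coloring_def
  proof (intro conjI ballI impI)
    fix a b assume "a \<in> V" "b \<in> V" "{a, b} \<in> E"
    then show "\<kappa>0 a \<noteq> \<kappa>0 b"
      using \<kappa>0(2) simple_graph_edge(3)[OF G] by (metis bij_betw_imp_inj_on inj_onD)
  qed (rule \<kappa>0(1))
  ultimately have "\<kappa>0 \<in> colorings V E (adjoin01 N 1 1)"
    by (simp add: colorings_def)
  then have "card (colorings V E (adjoin01 N 2 0)) + card (colorings V E (adjoin01 N 0 2))
      < card (colorings V E (adjoin01 N 1 1))"
    using card_colorings_doubled_less[OF V G uv N] \<kappa>0(3,4) by blast
  moreover have "antipodal_coeff (chromatic_sym V E) N 2 = 0"
    using invariant N by (simp add: antipodal_invariant_def)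
  moreover have "antipodal_coeff (chromatic_sym V E) N 2 = chromatic_sym V E (adjoin01 N 2 0)
      - chromatic_sym V E (adjoin01 N 1 1) + chromatic_sym V E (adjoin01 N 0 2)"
    by (simp add: antipodal_coeff_def numeral_2_eq_2)
  ultimately show False
    unfolding chromatic_sym_eq_card_colorings by linarith
qed

theorem mainTheorem1:
  fixes V :: "'a set" and E :: "'a set set"
  assumes "simple_graph V E"
  shows "E = {} \<longleftrightarrow> chromatic_sym V E \<in> Gamma"
proof
  assume "E = {}"
  have "finite V"
    using assms by (simp add: simple_graph_def)
  have "power_sum 1 \<in> Gamma"
    by (rule Gamma.gen) simp
  then show "chromatic_sym V E \<in> Gamma"
    unfolding \<open>E = {}\<close> chromatic_sym_edgeless[OF \<open>finite V\<close>] by (rule fps_pow_in_Gamma)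
next
  assume "chromatic_sym V E \<in> Gamma"
  then have invariant: "antipodal_invariant (chromatic_sym V E)"
    by (rule Gamma_antipodal_invariant)
  show "E = {}"
  proof (rule ccontr)
    assume "E \<noteq> {}"
    then obtain e where "e \<in> E"
      by blast
    then obtain u v where "e = {u, v}"
      using assms unfolding simple_graph_def by blast
    with \<open>e \<in> E\<close> have "\<not> antipodal_invariant (chromatic_sym V E)"
      using chromatic_sym_not_antipodal_invariant[OF assms] by blast
    with invariant show False by contradiction
  qed
qed

end
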